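(* Let $\Phi=\forall u_1\ldots\forall u_n\exists e_1(D_1)\ldots\exists e_m(D_m).\varphi$ be a DQBF. If Algorithm 1 (as described in the context), run on $\Phi$, returns TRUE, then $\Phi$ is true; this holds for every admissible choice of the witnesses, definitions, satisfying assignments and cores made during the run.
   Context: For a set $V$ of variables, $[V]$ is the set of assignments $V\to\{\textsc{true},\textsc{false}\}$; assignments are identified with terms of the literals they make true, $\neg\sigma$ is the clause of the negations of these literals, and $\sigma|_W$ denotes restriction. A DQBF is $\Phi=\forall u_1\ldots\forall u_n\exists e_1(D_1)\ldots\exists e_m(D_m).\varphi$ with pairwise distinct variables, $U=\{u_i\}$, $E=\{e_j\}$, dependency sets $D(e_j)=D_j\subseteq U$, $\varphi$ a CNF over $U\cup E$; a model is a family $(f_e)_{e\in E}$, $f_e:[D(e)]\to\{\textsc{true},\textsc{false}\}$, such that for all $\sigma\in[U]$ the assignment $\sigma$ together with $e\mapsto f_e(\sigma|_{D(e)})$ satisfies $\varphi$; $\Phi$ is true iff it has a model. A definition of a variable $x$ by a set $X$ in a formula $\chi$ is a formula $\psi$ with $\mathit{var}(\psi)\subseteq X$ such that every satisfying assignment $\lambda$ of $\chi$ has $\lambda(x)=\psi[\lambda]$. Arbiter variables $e^\sigma$ ($e\in E$, $\sigma\in[D(e)]$) are fresh variables. Algorithm 1. Phase 1: set $A=\emptyset$, $\varphi_A=\emptyset$ (empty CNF), $\psi_{\mathit{Def}}=$ empty conjunction. For $i=1,\dots,m$: while $e_i$ has no definition by $A\cup D_i$ in $\varphi\wedge\varphi_A$,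 choose an assignment $\xi\in[D_i\cup A]$ such that both $\varphi\wedge\varphi_A\wedge\xi\wedge e_i$ and $\varphi\wedge\varphi_A\wedge\xi\wedge\neg e_i$ are satisfiable, let $\sigma=\xi|_{D_i}$, add the new variable $e_i^\sigma$ to $A$ and add the clauses $(e_i^\sigma\vee\neg\sigma\vee\neg e_i)$ and $(\neg e_i^\sigma\vee\neg\sigma\vee e_i)$ to $\varphi_A$. When $e_i$ has a definition by $A\cup D_i$ in $\varphi\wedge\varphi_A$, choose such a definition $\psi^i$ and conjoin $(e_i\leftrightarrow\psi^i)$ to $\psi_{\mathit{Def}}$. Phase 2: let $\tau\in[A]$ set all arbiter variables to true and let $\mathcal{C}=\emptyset$ (a set of clauses over $A$). Repeat: if $\neg\varphi\wedge\psi_{\mathit{Def}}\wedge\tau$ is unsatisfiable, return TRUE. Otherwise choose a satisfying assignment $\sigma$ of it, choose a subset $\rho$ of the literals of $\tau\wedge\sigma|_U$ such that $\varphi\wedge\varphi_A\wedge\rho$ is unsatisfiable, add the clause $\neg(\rho|_A)$ to $\mathcal{C}$; if $\mathcal{C}$ is satisfiable, let $\tau\in[A]$ be a satisfying assignment of $\mathcal{C}$ (extended arbitrarily to all of $A$) and repeat; otherwise return FALSE. *)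

theory Defs
  imports Main
begin

text \<open>Literals are pairs (x, b): (x, True) is the positive literal x, (x, False) is the
  negative literal.
  Assignments are total functions into bool; an assignment of a variable set V
  (an element of [V]) is represented by the set of variables of V it makes true.\<close>

type_synonym 'x lit = "'x \<times> bool"
type_synonym 'x clause = "'x lit set"
type_synonym 'x cnf = "'x clause set"

definition sat_clause :: "('x \<Rightarrow> bool) \<Rightarrow> 'x clause \<Rightarrow> bool" where
  "sat_clause asg c \<longleftrightarrow> (\<exists>(x, b) \<in> c. asg x = b)"

definition sat_cnf :: "('x \<Rightarrow> bool) \<Rightarrow> 'x cnf \<Rightarrow> bool" where
  "sat_cnf asg F \<longleftrightarrow> (\<forall>c \<in> F. sat_clause asg c)"

definition satisfiable :: "'x cnf \<Rightarrow> bool" where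
  "satisfiable F \<longleftrightarrow> (\<exists>asg. sat_cnf asg F)"

definition cnf_vars :: "'x cnf \<Rightarrow> 'x set" where
  "cnf_vars F = {x. \<exists>c \<in> F. \<exists>b. (x, b) \<in> c}"

definition term_cnf :: "'x set \<Rightarrow> 'x set \<Rightarrow> 'x cnf" where
  "term_cnf W \<sigma> = {{(x, x \<in> \<sigma>)} | x. x \<in> W}"

definition term_lits :: "'x set \<Rightarrow> 'x set \<Rightarrow> 'x lit set" where
  "term_lits W \<sigma> = {(x, x \<in> \<sigma>) | x. x \<in> W}"

definition neg_term :: "'x set \<Rightarrow> 'x set \<Rightarrow> 'x clause" where
  "neg_term W \<sigma> = {(x, x \<notin> \<sigma>) | x. x \<in> W}"

datatype 'x form = FTrue | FFalse | FVar 'x | FNot "'x form"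
  | FAnd "'x form" "'x form" | FOr "'x form" "'x form"

fun fvars :: "'x form \<Rightarrow> 'x set" where
  "fvars FTrue = {}" | "fvars FFalse = {}" | "fvars (FVar x) = {x}"
| "fvars (FNot f) = fvars f" | "fvars (FAnd f g) = fvars f \<union> fvars g"
| "fvars (FOr f g) = fvars f \<union> fvars g"

fun feval :: "('x \<Rightarrow> bool) \<Rightarrow> 'x form \<Rightarrow> bool" where
  "feval asg FTrue = True" | "feval asg FFalse = False" | "feval asg (FVar x) = asg x"
| "feval asg (FNot f) = (\<not> feval asg f)" | "feval asg (FAnd f g) = (feval asg f \<and> feval asg g)"
| "feval asg (FOr f g) = (feval asg f \<or> feval asg g)"

definition is_definition :: "'x cnf \<Rightarrow> 'x \<Rightarrow> 'x set \<Rightarrow> 'x form \<Rightarrow> bool" where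
  "is_definition \<chi> x X \<psi> \<longleftrightarrow> fvars \<psi> \<subseteq> X \<and> (\<forall>asg. sat_cnf asg \<chi> \<longrightarrow> asg x = feval asg \<psi>)"

text \<open>A DQBF is given by the set U of universal variables, the list es = [e_1,...,e_m] of
  existential variables (in prefix order), the dependency map dep and the matrix \<phi>.\<close>
definition dqbf_wf :: "'v set \<Rightarrow> 'v list \<Rightarrow> ('v \<Rightarrow> 'v set) \<Rightarrow> 'v cnf \<Rightarrow> bool" where
  "dqbf_wf U es dep \<phi> \<longleftrightarrow> finite U \<and> distinct es \<and> U \<inter> set es = {}
     \<and> (\<forall>e \<in> set es. dep e \<subseteq> U) \<and> finite \<phi> \<and> (\<forall>c \<in> \<phi>. finite c)
     \<and> cnf_vars \<phi> \<subseteq> U \<union> set es"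

text \<open>Model: f e is a function on [D(e)] (assignments given by their true-sets \<subseteq> D(e)).\<close>
definition dqbf_model :: "'v set \<Rightarrow> 'v list \<Rightarrow> ('v \<Rightarrow> 'v set) \<Rightarrow> 'v cnf
     \<Rightarrow> ('v \<Rightarrow> 'v set \<Rightarrow> bool) \<Rightarrow> bool" where
  "dqbf_model U es dep \<phi> f \<longleftrightarrow>
     (\<forall>\<sigma>. \<sigma> \<subseteq> U \<longrightarrow>
        sat_cnf (\<lambda>x. if x \<in> U then x \<in> \<sigma> else f x (\<sigma> \<inter> dep x)) \<phi>)"

definition dqbf_true :: "'v set \<Rightarrow> 'v list \<Rightarrow> ('v \<Rightarrow> 'v set) \<Rightarrow> 'v cnf \<Rightarrow> bool" where
  "dqbf_true U es dep \<phi> \<longleftrightarrow> (\<exists>f. dqbf_model U es dep \<phi> f)"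

text \<open>Variables of the extended formulas: original variables and fresh arbiter
  variables e^\<sigma> (e an existential, \<sigma> \<in> [D(e)] given by its true-set).\<close>
datatype 'v avar = Orig 'v | Arb 'v "'v set"

definition lift_cnf :: "'v cnf \<Rightarrow> 'v avar cnf" where
  "lift_cnf \<phi> = (\<lambda>c. (\<lambda>(x, b). (Orig x, b)) ` c) ` \<phi>"

text \<open>Phase 1, inner while loop for the existential e:
  arb_loop U dep \<phi> e (A, \<phi>A) (A', \<phi>A') means the loop can go from (A,\<phi>A) to (A',\<phi>A').\<close>
inductive arb_loop :: "'v set \<Rightarrow> ('v \<Rightarrow> 'v set) \<Rightarrow> 'v cnf \<Rightarrow> 'v
    \<Rightarrow> 'v avar set \<times> 'v avar cnf \<Rightarrow> 'v avar set \<times> 'v avar cnf \<Rightarrow> bool"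
  for U dep \<phi> e where
  stop: "arb_loop U dep \<phi> e S S"
| step: "\<lbrakk> \<not> (\<exists>\<psi>. is_definition (lift_cnf \<phi> \<union> \<phi>A) (Orig e) (Orig ` dep e \<union> A) \<psi>);
           \<xi> \<subseteq> Orig ` dep e \<union> A;
           satisfiable (lift_cnf \<phi> \<union> \<phi>A \<union> term_cnf (Orig ` dep e \<union> A) \<xi> \<union> {{(Orig e, True)}});
           satisfiable (lift_cnf \<phi> \<union> \<phi>A \<union> term_cnf (Orig ` dep e \<union> A) \<xi> \<union> {{(Orig e, False)}});
           \<sigma> = {u \<in> dep e. Orig u \<in> \<xi>};
           arb_loop U dep \<phi> e
             (insert (Arb e \<sigma>) A,
              \<phi>A \<union> {insert (Arb e \<sigma>, True) (insert (Orig e, False) (neg_term (Orig ` dep e) (Orig ` \<sigma>))),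
                     insert (Arb e \<sigma>, False) (insert (Orig e, True) (neg_term (Orig ` dep e) (Orig ` \<sigma>)))})
             S' \<rbrakk>
         \<Longrightarrow> arb_loop U dep \<phi> e (A, \<phi>A) S'"

text \<open>Phase 1, outer for loop over the remaining existentials. The list defs represents
  \<psi>_Def as the conjunction of (e \<leftrightarrow> \<psi>) over its entries (e, \<psi>).\<close>
inductive phase1 :: "'v set \<Rightarrow> ('v \<Rightarrow> 'v set) \<Rightarrow> 'v cnf \<Rightarrow> 'v list
    \<Rightarrow> 'v avar set \<times> 'v avar cnf \<times> ('v \<times> 'v avar form) list
    \<Rightarrow> 'v avar set \<times> 'v avar cnf \<times> ('v \<times> 'v avar form) list \<Rightarrow> bool"
  for U dep \<phi> where
  nil: "phase1 U dep \<phi> [] S S"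
| cons: "\<lbrakk> arb_loop U dep \<phi> e (A, \<phi>A) (A', \<phi>A');
           is_definition (lift_cnf \<phi> \<union> \<phi>A') (Orig e) (Orig ` dep e \<union> A') \<psi>;
           phase1 U dep \<phi> es (A', \<phi>A', defs @ [(e, \<psi>)]) S' \<rbrakk>
         \<Longrightarrow> phase1 U dep \<phi> (e # es) (A, \<phi>A, defs) S'"

definition sat_defs :: "('v avar \<Rightarrow> bool) \<Rightarrow> ('v \<times> 'v avar form) list \<Rightarrow> bool" where
  "sat_defs asg defs \<longleftrightarrow> (\<forall>(e, \<psi>) \<in> set defs. asg (Orig e) = feval asg \<psi>)"

definition p2_sat :: "'v cnf \<Rightarrow> ('v \<times> 'v avar form) list \<Rightarrow> 'v avar set \<Rightarrow> 'v avar set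
     \<Rightarrow> ('v avar \<Rightarrow> bool) \<Rightarrow> bool" where
  "p2_sat \<phi> defs A \<tau> asg \<longleftrightarrow> \<not> sat_cnf asg (lift_cnf \<phi>) \<and> sat_defs asg defs
      \<and> sat_cnf asg (term_cnf A \<tau>)"

text \<open>Phase 2: phase2_true ... \<tau> C means that the loop, started in state (\<tau>, C),
  can return TRUE.\<close>
inductive phase2_true :: "'v set \<Rightarrow> 'v cnf \<Rightarrow> 'v avar set \<Rightarrow> 'v avar cnf
    \<Rightarrow> ('v \<times> 'v avar form) list \<Rightarrow> 'v avar set \<Rightarrow> 'v avar cnf \<Rightarrow> bool"
  for U \<phi> A \<phi>A defs where
  ret_true: "\<not> (\<exists>asg. p2_sat \<phi> defs A \<tau> asg) \<Longrightarrow> phase2_true U \<phi> A \<phi>A defs \<tau> C"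
| iter: "\<lbrakk> p2_sat \<phi> defs A \<tau> \<sigma>;
           \<rho> \<subseteq> term_lits A \<tau> \<union> {(Orig u, \<sigma> (Orig u)) | u. u \<in> U};
           \<not> satisfiable (lift_cnf \<phi> \<union> \<phi>A \<union> (\<lambda>l. {l}) ` \<rho>);
           C' = insert {(x, \<not> b) | x b. (x, b) \<in> \<rho> \<and> x \<in> A} C;
           \<tau>' \<subseteq> A; sat_cnf (\<lambda>x. x \<in> \<tau>') C';
           phase2_true U \<phi> A \<phi>A defs \<tau>' C' \<rbrakk>
         \<Longrightarrow> phase2_true U \<phi> A \<phi>A defs \<tau> C"

definition alg1_returns_true :: "'v set \<Rightarrow> 'v list \<Rightarrow> ('v \<Rightarrow> 'v set) \<Rightarrow> 'v cnf \<Rightarrow> bool" where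
  "alg1_returns_true U es dep \<phi> \<longleftrightarrow>
     (\<exists>A \<phi>A defs. phase1 U dep \<phi> es ({}, {}, []) (A, \<phi>A, defs)
        \<and> phase2_true U \<phi> A \<phi>A defs A {})"

end

theory Submission
  imports Defs
begin

text \<open>Phase 2 can only return TRUE after reaching an assignment \<tau> of the arbiter variables
  for which \<not>\<phi> \<and> \<psi>_Def \<and> \<tau> is unsatisfiable. Each definition \<psi>_i mentions only D_i and
  arbiter variables, so fixing the arbiters to \<tau> turns \<psi>_i into a Skolem function of D_i.
  For every universal assignment, these Skolem functions together with \<tau> satisfy \<psi>_Def \<and> \<tau>,
  hence by unsatisfiability they satisfy \<phi>: they form a model. Soundness thus uses only
  the variables the definitions mention, not the cores or the definitional property itself.\<close>

abbreviation arbiters :: "'v avar set" where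
  "arbiters \<equiv> {Arb e s | e s. True}"

definition avar_asg :: "('v \<Rightarrow> bool) \<Rightarrow> 'v avar set \<Rightarrow> 'v avar \<Rightarrow> bool" where
  "avar_asg a \<tau> y = (case y of Orig x \<Rightarrow> a x | Arb _ _ \<Rightarrow> y \<in> \<tau>)"

lemma avar_asg_Orig [simp]: "avar_asg a \<tau> (Orig x) = a x"
  and avar_asg_Arb [simp]: "avar_asg a \<tau> (Arb e s) = (Arb e s \<in> \<tau>)"
  by (simp_all add: avar_asg_def)

definition arbiter_skolem :: "('v \<times> 'v avar form) list \<Rightarrow> 'v avar set \<Rightarrow> 'v \<Rightarrow> 'v set \<Rightarrow> bool" where
  "arbiter_skolem defs \<tau> e s = feval (avar_asg (\<lambda>u. u \<in> s) \<tau>) (the (map_of defs e))"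

lemma feval_cong: "(\<And>x. x \<in> fvars \<psi> \<Longrightarrow> a x = b x) \<Longrightarrow> feval a \<psi> = feval b \<psi>"
  by (induction \<psi>) auto

lemma feval_avar_asg_local:
  assumes "fvars \<psi> \<subseteq> Orig ` D \<union> arbiters" and "\<And>x. x \<in> D \<Longrightarrow> a x = b x"
  shows "feval (avar_asg a \<tau>) \<psi> = feval (avar_asg b \<tau>) \<psi>"
  by (rule feval_cong) (use assms in \<open>auto simp: avar_asg_def\<close>)

lemma sat_cnf_lift_cnf: "sat_cnf asg (lift_cnf \<phi>) \<longleftrightarrow> sat_cnf (asg \<circ> Orig) \<phi>"
  unfolding sat_cnf_def sat_clause_def lift_cnf_def by (simp add: split_def)

lemma sat_cnf_term_cnf: "sat_cnf asg (term_cnf W \<sigma>) \<longleftrightarrow> (\<forall>x \<in> W. asg x = (x \<in> \<sigma>))"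
  unfolding sat_cnf_def sat_clause_def term_cnf_def by auto

lemma arb_loop_adds_arbiters:
  "arb_loop U dep \<phi> e S S' \<Longrightarrow> fst S' \<subseteq> fst S \<union> arbiters"
  by (induction rule: arb_loop.induct) auto

lemma phase1_arbiters:
  "phase1 U dep \<phi> es (A, \<phi>A, defs) (A', \<phi>A', defs') \<Longrightarrow> A' \<subseteq> A \<union> arbiters"
proof (induction es "(A, \<phi>A, defs)" "(A', \<phi>A', defs')" arbitrary: A \<phi>A defs rule: phase1.induct)
  case (cons e A \<phi>A A\<^sub>e \<phi>A\<^sub>e \<psi> es defs)
  then show ?case using arb_loop_adds_arbiters[OF cons.hyps(1)] by auto
qed simp

lemma phase1_keys:
  "phase1 U dep \<phi> es (A, \<phi>A, defs) (A', \<phi>A', defs') \<Longrightarrow> map fst defs' = map fst defs @ es"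
  by (induction es "(A, \<phi>A, defs)" "(A', \<phi>A', defs')" arbitrary: A \<phi>A defs rule: phase1.induct)
    simp_all

lemma phase1_def_vars:
  "phase1 U dep \<phi> es (A, \<phi>A, defs) (A', \<phi>A', defs') \<Longrightarrow> A \<subseteq> arbiters \<Longrightarrow>
   \<forall>(e, \<psi>) \<in> set defs. fvars \<psi> \<subseteq> Orig ` dep e \<union> arbiters \<Longrightarrow>
   \<forall>(e, \<psi>) \<in> set defs'. fvars \<psi> \<subseteq> Orig ` dep e \<union> arbiters"
proof (induction es "(A, \<phi>A, defs)" "(A', \<phi>A', defs')" arbitrary: A \<phi>A defs rule: phase1.induct)
  case (cons e A \<phi>A A\<^sub>e \<phi>A\<^sub>e \<psi> es defs)
  have "A\<^sub>e \<subseteq> arbiters"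
    using arb_loop_adds_arbiters[OF cons.hyps(1)] cons.prems(1) by auto
  moreover have "fvars \<psi> \<subseteq> Orig ` dep e \<union> A\<^sub>e"
    using cons.hyps(2) by (simp add: is_definition_def)
  ultimately have "\<forall>(e, \<psi>) \<in> set (defs @ [(e, \<psi>)]). fvars \<psi> \<subseteq> Orig ` dep e \<union> arbiters"
    using cons.prems(2) by auto
  with \<open>A\<^sub>e \<subseteq> arbiters\<close> show ?case by (rule cons.hyps(4))
qed simp

lemma phase2_true_reaches_unsat:
  "phase2_true U \<phi> A \<phi>A defs \<tau> C \<Longrightarrow> \<exists>\<tau>'. \<not> (\<exists>asg. p2_sat \<phi> defs A \<tau>' asg)"
  by (induction rule: phase2_true.induct) auto

lemma dqbf_model_arbiter_skolem:
  assumes wf: "dqbf_wf U es dep \<phi>"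
    and keys: "map fst defs = es"
    and def_vars: "\<forall>(e, \<psi>) \<in> set defs. fvars \<psi> \<subseteq> Orig ` dep e \<union> arbiters"
    and A: "A \<subseteq> arbiters"
    and unsat: "\<not> (\<exists>asg. p2_sat \<phi> defs A \<tau> asg)"
  shows "dqbf_model U es dep \<phi> (arbiter_skolem defs \<tau>)"
  unfolding dqbf_model_def
proof (intro allI impI)
  fix \<sigma> assume "\<sigma> \<subseteq> U"
  define a where "a = (\<lambda>x. if x \<in> U then x \<in> \<sigma> else arbiter_skolem defs \<tau> x (\<sigma> \<inter> dep x))"
  have "sat_defs (avar_asg a \<tau>) defs"
    unfolding sat_defs_def
  proof (clarify)
    fix e \<psi> assume e\<psi>: "(e, \<psi>) \<in> set defs"
    have "e \<in> set es" using e\<psi> keys by force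
    with wf keys have "e \<notin> U" and dep: "dep e \<subseteq> U" and "distinct (map fst defs)"
      by (auto simp: dqbf_wf_def)
    then have "map_of defs e = Some \<psi>" using e\<psi> by simp
    then have "avar_asg a \<tau> (Orig e) = feval (avar_asg (\<lambda>u. u \<in> \<sigma> \<inter> dep e) \<tau>) \<psi>"
      using \<open>e \<notin> U\<close> by (simp add: a_def arbiter_skolem_def)
    also have "\<dots> = feval (avar_asg a \<tau>) \<psi>"
      using def_vars e\<psi> dep by (intro feval_avar_asg_local) (auto simp: a_def)
    finally show "avar_asg a \<tau> (Orig e) = feval (avar_asg a \<tau>) \<psi>" .
  qed
  moreover have "sat_cnf (avar_asg a \<tau>) (term_cnf A \<tau>)"
    using A by (auto simp: sat_cnf_term_cnf)
  ultimately have "sat_cnf (avar_asg a \<tau> \<circ> Orig) \<phi>"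
    using unsat by (auto simp: p2_sat_def sat_cnf_lift_cnf)
  moreover have "avar_asg a \<tau> \<circ> Orig = a" by auto
  ultimately have "sat_cnf a \<phi>" by simp
  then show "sat_cnf (\<lambda>x. if x \<in> U then x \<in> \<sigma> else arbiter_skolem defs \<tau> x (\<sigma> \<inter> dep x)) \<phi>"
    by (simp only: a_def)
qed

theorem theorem1:
  fixes U :: "'v set" and es :: "'v list" and dep :: "'v \<Rightarrow> 'v set" and \<phi> :: "'v cnf"
  assumes "dqbf_wf U es dep \<phi>"
    and "alg1_returns_true U es dep \<phi>"
  shows "dqbf_true U es dep \<phi>"
proof -
  from assms(2) obtain A \<phi>A defs where
    phase1: "phase1 U dep \<phi> es ({}, {}, []) (A, \<phi>A, defs)" and
    phase2: "phase2_true U \<phi> A \<phi>A defs A {}"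
    unfolding alg1_returns_true_def by blast
  from phase2_true_reaches_unsat[OF phase2] obtain \<tau> where
    "\<not> (\<exists>asg. p2_sat \<phi> defs A \<tau> asg)" by blast
  with assms(1) phase1_arbiters[OF phase1] phase1_keys[OF phase1] phase1_def_vars[OF phase1]
  have "dqbf_model U es dep \<phi> (arbiter_skolem defs \<tau>)"
    by (intro dqbf_model_arbiter_skolem) auto
  then show ?thesis unfolding dqbf_true_def by blast
qed

end
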